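(* Let $(I,\le)$ be a totally ordered set with smallest element $0$, and let $\{G_i,\pi_{ij}\}$ be a direct system of finitely generated groups indexed by $I$ with surjective homomorphisms $\pi_{ij}:G_i\to G_j$ for all $j\ge i$ (with $\pi_{ii}=\mathrm{id}$ and $\pi_{jk}\circ\pi_{ij}=\pi_{ik}$). Let $G_\infty=\varinjlim G_i$, let $G=G_0$, let $\varphi_i=\pi_{0i}:G\to G_i$, let $\varphi:G\to G_\infty$ be the canonical (surjective) map, and for a subgroup $H\le G$ put $H_i=\varphi_i(H)$. Fix a prime $p$. Then for each normal subgroup $K\trianglelefteq G_\infty$ of $p$-power index there exists a normal subgroup $H'\trianglelefteq G$ of $p$-power index such that: (1) $K=\varinjlim H'_i$ (i.e. $K=\varphi(H')$ is the direct limit of the subgroups $H'_i$ under the restricted maps $\pi_{ij}$); (2) $[G_\infty:K]=\lim_{i\in I}[G_i:H'_i]$; (3) $d_p(K)=\lim_{i\in I}d_p(H'_i)$.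
   Context: For a group $A$, $d(A)$ is the minimal number of generators and $d_p(A)=d\big(A/[A,A]A^p\big)$. Limits over $i\in I$ are taken along the total order of $I$. *)

theory Defs
  imports Complex_Main "HOL-Algebra.Algebra"
begin

definition fin_gen :: "('a, 'b) monoid_scheme \<Rightarrow> bool" where
  "fin_gen A \<longleftrightarrow> (\<exists>S. finite S \<and> S \<subseteq> carrier A \<and> generate A S = carrier A)"

definition gen_rank :: "('a, 'b) monoid_scheme \<Rightarrow> nat" where
  "gen_rank A = (LEAST n. \<exists>S. finite S \<and> S \<subseteq> carrier A \<and> card S = n \<and> generate A S = carrier A)"

definition comm_ppow :: "('a, 'b) monoid_scheme \<Rightarrow> nat \<Rightarrow> 'a set" where
  "comm_ppow A p = generate A (derived A (carrier A) \<union> {x [^]\<^bsub>A\<^esub> p | x. x \<in> carrier A})"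

definition d_p :: "('a, 'b) monoid_scheme \<Rightarrow> nat \<Rightarrow> nat" where
  "d_p A p = gen_rank (A Mod (comm_ppow A p))"

definition p_power_index :: "('a, 'b) monoid_scheme \<Rightarrow> 'a set \<Rightarrow> nat \<Rightarrow> bool" where
  "p_power_index A H p \<longleftrightarrow> (\<exists>n. card (rcosets\<^bsub>A\<^esub> H) = p ^ n)"

definition is_direct_limit ::
  "'i::linorder set \<Rightarrow> ('i \<Rightarrow> ('a, 'b) monoid_scheme) \<Rightarrow> ('i \<Rightarrow> 'i \<Rightarrow> 'a \<Rightarrow> 'a)
    \<Rightarrow> ('c, 'd) monoid_scheme \<Rightarrow> ('i \<Rightarrow> 'a \<Rightarrow> 'c) \<Rightarrow> bool" where
  "is_direct_limit I G \<pi> L \<psi> \<longleftrightarrow>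
     (\<forall>i\<in>I. \<psi> i \<in> hom (G i) L) \<and>
     (\<forall>i\<in>I. \<forall>j\<in>I. i \<le> j \<longrightarrow> (\<forall>x\<in>carrier (G i). \<psi> j (\<pi> i j x) = \<psi> i x)) \<and>
     carrier L = (\<Union>i\<in>I. \<psi> i ` carrier (G i)) \<and>
     (\<forall>i\<in>I. \<forall>j\<in>I. \<forall>x\<in>carrier (G i). \<forall>y\<in>carrier (G j).
        \<psi> i x = \<psi> j y \<longrightarrow> (\<exists>k\<in>I. i \<le> k \<and> j \<le> k \<and> \<pi> i k x = \<pi> j k y))"

text \<open>The filter "i \<rightarrow> \<infinity> in I" along the total order of I.\<close>
definition along :: "'i::linorder set \<Rightarrow> 'i filter" where
  "along I = (INF i\<in>I. principal {j\<in>I. i \<le> j})"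

end

theory Submission
  imports Defs
begin

text \<open>
  Since all transition maps are onto, every \<open>\<psi> i\<close> maps \<open>G\<^sub>i\<close> onto the limit. Take for
  \<open>H'\<close> the preimage of \<open>K\<close> in \<open>G\<^sub>0\<close>: its image in \<open>G\<^sub>i\<close> is the preimage of \<open>K\<close> under
  \<open>\<psi> i\<close>, so every index \<open>[G\<^sub>i : H'\<^sub>i]\<close> equals \<open>[G\<^sub>\<infinity> : K]\<close>, and the \<open>H'\<^sub>i\<close> form a
  surjective direct system with limit \<open>K\<close>. As \<open>H'\<close> has finite index in the finitely generated
  group \<open>G\<^sub>0\<close>, it is finitely generated (Schreier).

  For \<open>d\<^sub>p\<close> write \<open>\<Phi>(A) = [A,A]A\<^sup>p\<close>. If \<open>A\<close> is finitely generated, \<open>A/\<Phi>(A)\<close> is a finitely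
  generated abelian group of exponent \<open>p\<close>, hence finite. The preimages in \<open>H'\<^sub>0\<close> of the
  \<open>\<Phi>(H'\<^sub>k)\<close> form an increasing chain of subgroups containing \<open>\<Phi>(H'\<^sub>0)\<close>, so the chain
  stabilises. From then on the kernel of \<open>H'\<^sub>j \<rightarrow> K/\<Phi>(K)\<close> is exactly \<open>\<Phi>(H'\<^sub>j)\<close>, whence
  \<open>d\<^sub>p(H'\<^sub>j) = d\<^sub>p(K)\<close>.
\<close>

section \<open>The subgroup \<open>[A,A]A\<^sup>p\<close>\<close>

lemma (in group) conj_nat_pow:
  assumes "g \<in> carrier G" "x \<in> carrier G"
  shows "g \<otimes> x [^] (n::nat) \<otimes> inv g = (g \<otimes> x \<otimes> inv g) [^] n"
proof (induction n)
  case 0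
  then show ?case using assms by simp
next
  case (Suc n)
  have "(g \<otimes> x \<otimes> inv g) [^] Suc n = (g \<otimes> x [^] n \<otimes> inv g) \<otimes> (g \<otimes> x \<otimes> inv g)"
    using Suc by simp
  also have "\<dots> = g \<otimes> (x [^] n \<otimes> x) \<otimes> inv g"
    using assms by (simp add: m_assoc[symmetric]) (simp add: m_assoc)
  finally show ?case by simp
qed

lemma derived_subset_comm_ppow: "derived A (carrier A) \<subseteq> comm_ppow A p"
  unfolding comm_ppow_def by (auto intro: generate.incl)

lemma nat_pow_in_comm_ppow: "x \<in> carrier A \<Longrightarrow> x [^]\<^bsub>A\<^esub> p \<in> comm_ppow A p"
  unfolding comm_ppow_def by (auto intro: generate.incl)

lemma (in group) comm_ppow_normal: "comm_ppow G p \<lhd> G"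
proof -
  interpret D: normal "derived G (carrier G)" G by (rule derived_self_is_normal)
  show ?thesis unfolding comm_ppow_def
  proof (rule normal_generateI)
    show "derived G (carrier G) \<union> {x [^] p |x. x \<in> carrier G} \<subseteq> carrier G"
      using D.subset by auto
  next
    fix h g
    assume h: "h \<in> derived G (carrier G) \<union> {x [^] p |x. x \<in> carrier G}" and g: "g \<in> carrier G"
    show "g \<otimes> h \<otimes> inv g \<in> derived G (carrier G) \<union> {x [^] p |x. x \<in> carrier G}"
    proof (cases "h \<in> derived G (carrier G)")
      case True
      then show ?thesis using D.inv_op_closed2[OF g] by auto
    next
      case False
      then obtain x where "x \<in> carrier G" "h = x [^] p" using h by auto
      then show ?thesis using conj_nat_pow[OF g, of x p] g by auto
    qed
  qed
qed

lemma (in group_hom) comm_ppow_image: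
  assumes surj: "h ` carrier G = carrier H"
  shows "h ` comm_ppow G p = comm_ppow H p"
proof -
  have powers: "h ` {x [^]\<^bsub>G\<^esub> p |x. x \<in> carrier G} = {y [^]\<^bsub>H\<^esub> p |y. y \<in> carrier H}"
  proof -
    have "h ` (\<lambda>x. x [^]\<^bsub>G\<^esub> p) ` carrier G = (\<lambda>y. y [^]\<^bsub>H\<^esub> p) ` h ` carrier G"
      unfolding image_image by (rule image_cong) (simp_all add: hom_nat_pow)
    then show ?thesis using surj by (simp add: setcompr_eq_image)
  qed
  have "derived G (carrier G) \<union> {x [^]\<^bsub>G\<^esub> p |x. x \<in> carrier G} \<subseteq> carrier G"
    using G.derived_incl[OF subset_refl G.subgroup_self] by auto
  then show ?thesis
    unfolding comm_ppow_def
    by (simp add: generate_img[symmetric] image_Un powers derived_img[symmetric] surj)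
qed

lemma (in normal) comm_group_FactGroup:
  assumes "derived G (carrier G) \<subseteq> H"
  shows "comm_group (G Mod H)"
proof (rule group.group_comm_groupI[OF factorgroup_is_group])
  fix U V assume "U \<in> carrier (G Mod H)" "V \<in> carrier (G Mod H)"
  then obtain a b where ab: "a \<in> carrier G" "b \<in> carrier G" "U = H #> a" "V = H #> b"
    unfolding FactGroup_def RCOSETS_def by auto
  have "a \<otimes> b \<otimes> inv a \<otimes> inv b \<in> derived G (carrier G)"
    using ab(1,2) generate.incl[of _ "derived_set G (carrier G)"] unfolding derived_def by blast
  moreover have "(a \<otimes> b) \<otimes> inv (b \<otimes> a) = a \<otimes> b \<otimes> inv a \<otimes> inv b"
    using ab by (simp add: inv_mult_group m_assoc)
  ultimately have "H #> ((a \<otimes> b) \<otimes> inv (b \<otimes> a)) = H"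
    using assms ab by (intro coset_join2[OF _ subgroup_axioms]) auto
  then have "H #> (a \<otimes> b) = H #> (b \<otimes> a)"
    using ab by (intro coset_mult_inv1) (simp_all add: subset)
  then show "U \<otimes>\<^bsub>G Mod H\<^esub> V = V \<otimes>\<^bsub>G Mod H\<^esub> U"
    using ab rcos_sum[of a b] rcos_sum[of b a] by simp
qed

lemma (in normal) FactGroup_nat_pow_eq_one:
  assumes "\<And>x. x \<in> carrier G \<Longrightarrow> x [^] (n::nat) \<in> H" and "C \<in> carrier (G Mod H)"
  shows "C [^]\<^bsub>G Mod H\<^esub> n = \<one>\<^bsub>G Mod H\<^esub>"
proof -
  obtain x where x: "x \<in> carrier G" "C = H #> x"
    using assms(2) unfolding FactGroup_def RCOSETS_def by auto
  have "C [^]\<^bsub>G Mod H\<^esub> n = H #> (x [^] n)"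
    using hom_nat_pow[OF r_coset_hom_Mod x(1) is_group factorgroup_is_group] x(2) by simp
  also have "\<dots> = H"
    using assms(1)[OF x(1)] x(1) by (simp add: coset_join2 subgroup_axioms)
  finally show ?thesis by simp
qed

lemma (in comm_group) finite_generate_of_exponent:
  assumes "finite S" "S \<subseteq> carrier G" "n \<noteq> 0" "\<And>x. x \<in> carrier G \<Longrightarrow> x [^] (n::nat) = \<one>"
  shows "finite (generate G S)"
  using assms(1,2)
proof (induction S rule: finite_induct)
  case empty
  then show ?case by (simp add: generate_empty)
next
  case (insert t T)
  then have t: "t \<in> carrier G" and T: "T \<subseteq> carrier G" by auto
  have cyclic: "generate G {t} = carrier (subgroup_generated G {t})"
    using t by (simp add: carrier_subgroup_generated)
  have "finite (generate G {t})"
    unfolding cyclic using finite_cyclic_subgroup[OF t] assms(3) assms(4)[OF t] by blast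
  then have "finite (generate G T <#> generate G {t})"
    using insert.IH[OF T] unfolding set_mult_def by simp
  moreover have "generate G (insert t T) \<subseteq> generate G T <#> generate G {t}"
  proof (rule generate_subgroup_incl)
    show "subgroup (generate G T <#> generate G {t}) G"
      using T t by (simp add: mult_subgroups generate_is_subgroup)
    have "s \<in> generate G T <#> generate G {t}" if "s \<in> T" for s
    proof -
      have "s \<otimes> \<one> \<in> generate G T <#> generate G {t}"
        using that by (auto simp: set_mult_def intro: generate.incl generate.one)
      then show ?thesis using that T by auto
    qed
    moreover have "\<one> \<otimes> t \<in> generate G T <#> generate G {t}"
      by (auto simp: set_mult_def intro: generate.incl generate.one)
    ultimately show "insert t T \<subseteq> generate G T <#> generate G {t}"
      using t by auto
  qed
  ultimately show ?case by (rule finite_subset[rotated])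
qed

lemma (in group) finite_index_comm_ppow:
  assumes "fin_gen G" "p \<noteq> 0"
  shows "finite (rcosets (comm_ppow G p))"
proof -
  let ?\<Phi> = "comm_ppow G p"
  interpret \<Phi>: normal ?\<Phi> G by (rule comm_ppow_normal)
  interpret Q: comm_group "G Mod ?\<Phi>"
    by (rule \<Phi>.comm_group_FactGroup[OF derived_subset_comm_ppow])
  interpret quot: group_hom G "G Mod ?\<Phi>" "\<lambda>x. ?\<Phi> #> x"
    by unfold_locales (simp add: \<Phi>.r_coset_hom_Mod)
  obtain S where S: "finite S" "S \<subseteq> carrier G" "generate G S = carrier G"
    using assms(1) unfolding fin_gen_def by auto
  have "generate (G Mod ?\<Phi>) ((\<lambda>x. ?\<Phi> #> x) ` S) = carrier (G Mod ?\<Phi>)"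
    using quot.generate_img[OF S(2)] S(3) by (simp add: carrier_FactGroup)
  moreover have "finite (generate (G Mod ?\<Phi>) ((\<lambda>x. ?\<Phi> #> x) ` S))"
    using S(1,2) assms(2) \<Phi>.FactGroup_nat_pow_eq_one[OF nat_pow_in_comm_ppow]
    by (intro Q.finite_generate_of_exponent) (auto simp: carrier_FactGroup)
  ultimately show ?thesis by (simp add: FactGroup_def)
qed

section \<open>Preimages, indices and generator ranks\<close>

lemma (in group_hom) preimage_normal:
  assumes surj: "h ` carrier G = carrier H" and N: "N \<lhd> H"
  shows "{x \<in> carrier G. h x \<in> N} \<lhd> G"
    and "G Mod {x \<in> carrier G. h x \<in> N} \<cong> H Mod N"
proof -
  interpret N: normal N H by (rule N)
  interpret quot: group_hom G "H Mod N" "\<lambda>x. N #>\<^bsub>H\<^esub> h x"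
  proof (intro group_hom.intro group_hom_axioms.intro)
    show "(\<lambda>x. N #>\<^bsub>H\<^esub> h x) \<in> hom G (H Mod N)"
      by (rule homI) (auto simp: carrier_FactGroup N.rcos_sum)
  qed (simp_all add: G.is_group N.factorgroup_is_group)
  have onto: "(\<lambda>x. N #>\<^bsub>H\<^esub> h x) ` carrier G = carrier (H Mod N)"
    using surj by (auto simp: carrier_FactGroup image_image[symmetric])
  have coset_eq: "N #>\<^bsub>H\<^esub> y = N \<longleftrightarrow> y \<in> N" if "y \<in> carrier H" for y
    using H.coset_join1[OF _ that N.subgroup_axioms] H.coset_join2[OF that N.subgroup_axioms] by blast
  have ker: "kernel G (H Mod N) (\<lambda>x. N #>\<^bsub>H\<^esub> h x) = {x \<in> carrier G. h x \<in> N}"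
    unfolding kernel_def one_FactGroup by (rule Collect_cong) (use coset_eq hom_closed in blast)
  show "{x \<in> carrier G. h x \<in> N} \<lhd> G"
    using quot.normal_kernel unfolding ker .
  show "G Mod {x \<in> carrier G. h x \<in> N} \<cong> H Mod N"
    using quot.FactGroup_iso[OF onto] unfolding ker .
qed

lemma (in group_hom) index_preimage:
  assumes "h ` carrier G = carrier H" "N \<lhd> H"
  shows "card (rcosets {x \<in> carrier G. h x \<in> N}) = card (rcosets\<^bsub>H\<^esub> N)"
  using iso_same_card[OF preimage_normal(2)[OF assms]] by (simp add: FactGroup_def)

lemma (in group_hom) subgroup_preimage:
  assumes "subgroup N H"
  shows "subgroup {x \<in> carrier G. h x \<in> N} G"
  by (rule subgroup.intro) (use assms in \<open>auto simp: subgroup.m_closed subgroup.m_inv_closed subgroup.one_closed\<close>)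

lemma hom_restrict_carriers:
  assumes "h \<in> hom G H" "S \<subseteq> carrier G" "h ` S \<subseteq> T"
  shows "h \<in> hom (G\<lparr>carrier := S\<rparr>) (H\<lparr>carrier := T\<rparr>)"
  using assms by (intro homI) (auto simp: subset_iff intro: hom_mult)

lemma generating_set_iso:
  assumes "\<phi> \<in> iso A B" "group A" "group B"
    and "finite S" "S \<subseteq> carrier A" "card S = n" "generate A S = carrier A"
  shows "\<exists>T. finite T \<and> T \<subseteq> carrier B \<and> card T = n \<and> generate B T = carrier B"
proof (intro exI conjI)
  have bij: "bij_betw \<phi> (carrier A) (carrier B)" using assms(1) by (simp add: iso_def)
  interpret group_hom A B \<phi>
    using assms(1-3) by (intro group_hom.intro group_hom_axioms.intro) (simp_all add: iso_def)
  show "finite (\<phi> ` S)" "\<phi> ` S \<subseteq> carrier B"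
    using assms(4,5) by auto
  show "card (\<phi> ` S) = n"
    using card_image[OF inj_on_subset[OF bij_betw_imp_inj_on[OF bij] assms(5)]] assms(6) by simp
  show "generate B (\<phi> ` S) = carrier B"
    using generate_img[OF assms(5)] assms(7) bij by (simp add: bij_betw_def)
qed

lemma gen_rank_iso:
  assumes "group A" "group B" "A \<cong> B"
  shows "gen_rank A = gen_rank B"
proof -
  obtain \<phi> \<chi> where "\<phi> \<in> iso A B" "\<chi> \<in> iso B A"
    using assms group.iso_sym[OF assms(1,3)] unfolding is_iso_def by auto
  then have "(\<exists>S. finite S \<and> S \<subseteq> carrier A \<and> card S = n \<and> generate A S = carrier A) \<longleftrightarrow>
             (\<exists>T. finite T \<and> T \<subseteq> carrier B \<and> card T = n \<and> generate B T = carrier B)" for n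
    using generating_set_iso assms(1,2) by meson
  then show ?thesis unfolding gen_rank_def by simp
qed

lemma (in group) setmult_rcos_supergroup:
  assumes "subgroup H1 G" "subgroup H2 G" "H1 \<subseteq> H2" "a \<in> carrier G"
  shows "H2 <#> (H1 #> a) = H2 #> a"
proof -
  have sub: "H1 \<subseteq> carrier G" "H2 \<subseteq> carrier G"
    using assms(1,2) by (simp_all add: subgroup.subset)
  have "H2 <#> H1 \<subseteq> H2"
    using mono_set_mult[of H2 H2 H1 H2 G] assms(3) subgroup_mult_id[OF assms(2)] by simp
  moreover have "H2 \<subseteq> H2 <#> H1"
    using mono_set_mult[of H2 H2 "{\<one>}" H1 G] subgroup.one_closed[OF assms(1)] sub(2)
    by (simp add: r_coset_eq_set_mult[symmetric])
  ultimately show ?thesis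
    using setmult_rcos_assoc[OF sub(2,1) assms(4)] by simp
qed

lemma (in group) rcosets_of_supergroup:
  assumes "subgroup H1 G" "subgroup H2 G" "H1 \<subseteq> H2"
  shows "rcosets H2 = (\<lambda>C. H2 <#> C) ` (rcosets H1)"
  using setmult_rcos_supergroup[OF assms] unfolding RCOSETS_def by auto

lemma (in group) index_supergroup_le:
  assumes "subgroup H1 G" "subgroup H2 G" "H1 \<subseteq> H2" "finite (rcosets H1)"
  shows "finite (rcosets H2)" "card (rcosets H2) \<le> card (rcosets H1)"
  using rcosets_of_supergroup[OF assms(1-3)] assms(4) by (auto simp: card_image_le)

lemma (in group) subgroup_eq_of_index_eq:
  assumes "subgroup H1 G" "subgroup H2 G" "H1 \<subseteq> H2" "finite (rcosets H1)"
    and "card (rcosets H2) = card (rcosets H1)"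
  shows "H1 = H2"
proof
  show "H1 \<subseteq> H2" by fact
  have inj: "inj_on (\<lambda>C. H2 <#> C) (rcosets H1)"
    using eq_card_imp_inj_on[OF assms(4)] rcosets_of_supergroup[OF assms(1-3)] assms(5) by simp
  have sub1: "H1 \<subseteq> carrier G" using assms(1) by (rule subgroup.subset)
  show "H2 \<subseteq> H1"
  proof
    fix h assume h: "h \<in> H2"
    then have hc: "h \<in> carrier G" using subgroup.mem_carrier[OF assms(2)] by simp
    have "H2 <#> (H1 #> h) = H2 <#> (H1 #> \<one>)"
      using setmult_rcos_supergroup[OF assms(1-3)] hc h subgroup.subset[OF assms(2)]
        coset_join2[OF hc assms(2) h] by simp
    moreover have "H1 #> h \<in> rcosets H1" "H1 #> \<one> \<in> rcosets H1"
      using rcosetsI[OF sub1] hc by auto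
    ultimately have "H1 #> h = H1" using inj sub1 by (auto dest: inj_onD)
    then show "h \<in> H1" using coset_join1[OF _ hc assms(1)] by simp
  qed
qed

lemma (in group) mono_subgroups_stabilise:
  fixes M :: "'i::linorder \<Rightarrow> 'a set"
  assumes "i \<in> I"
    and sg: "\<And>k. k \<in> I \<Longrightarrow> subgroup (M k) G"
    and fin: "\<And>k. k \<in> I \<Longrightarrow> finite (rcosets (M k))"
    and mono: "\<And>k l. k \<in> I \<Longrightarrow> l \<in> I \<Longrightarrow> k \<le> l \<Longrightarrow> M k \<subseteq> M l"
  obtains i1 where "i1 \<in> I" "\<And>k. k \<in> I \<Longrightarrow> i1 \<le> k \<Longrightarrow> M k = M i1"
proof -
  obtain i1 where i1: "i1 \<in> I" and least: "\<And>k. k \<in> I \<Longrightarrow> card (rcosets (M i1)) \<le> card (rcosets (M k))"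
    using ex_has_least_nat[of "\<lambda>k. k \<in> I" i "\<lambda>k. card (rcosets (M k))"] assms(1) by blast
  have stable: "M k = M i1" if k: "k \<in> I" "i1 \<le> k" for k
  proof (rule subgroup_eq_of_index_eq[symmetric])
    show "M i1 \<subseteq> M k" using mono[OF i1 k] .
    then show "card (rcosets (M k)) = card (rcosets (M i1))"
      using index_supergroup_le(2)[OF sg[OF i1] sg[OF k(1)] _ fin[OF i1]] least[OF k(1)] by simp
  qed (use sg fin i1 k in auto)
  show thesis using that i1 stable by blast
qed

section \<open>Schreier's lemma\<close>

locale right_transversal = group +
  fixes N :: "'a set" and r :: "'a \<Rightarrow> 'a"
  assumes subgroup_N: "subgroup N G"
    and rep_in_coset: "x \<in> carrier G \<Longrightarrow> r x \<in> N #> x"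
    and rep_cong: "\<lbrakk>x \<in> carrier G; y \<in> carrier G; N #> x = N #> y\<rbrakk> \<Longrightarrow> r x = r y"
    and rep_one: "r \<one> = \<one>"
begin

lemma rep_closed: "x \<in> carrier G \<Longrightarrow> r x \<in> carrier G"
  using rep_in_coset r_coset_subset_G subgroup.subset[OF subgroup_N] by blast

lemma coset_rep: "x \<in> carrier G \<Longrightarrow> N #> r x = N #> x"
  using repr_independence[OF rep_in_coset _ subgroup_N] by simp

lemma rep_rep: "x \<in> carrier G \<Longrightarrow> r (r x) = r x"
  using rep_cong[OF rep_closed] coset_rep by blast

lemma rep_mult_rep: "\<lbrakk>x \<in> carrier G; g \<in> carrier G\<rbrakk> \<Longrightarrow> r (r x \<otimes> g) = r (x \<otimes> g)"
  using coset_rep rep_closed subgroup.subset[OF subgroup_N]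
  by (intro rep_cong) (simp_all add: coset_mult_assoc[symmetric])

lemma rep_of_mem: "h \<in> N \<Longrightarrow> r h = \<one>"
  using rep_cong[of h \<one>] coset_join2[OF _ subgroup_N] subgroup.mem_carrier[OF subgroup_N]
    subgroup.subset[OF subgroup_N] rep_one by simp

lemma mult_inv_rep_mem: "x \<in> carrier G \<Longrightarrow> x \<otimes> inv (r x) \<in> N"
proof -
  assume x: "x \<in> carrier G"
  then have "inv (r x \<otimes> inv x) \<in> N"
    using subgroup.rcos_module_imp[OF subgroup_N is_group x rep_in_coset[OF x]]
    by (simp add: subgroup.m_inv_closed[OF subgroup_N])
  then show ?thesis using x rep_closed[OF x] by (simp add: inv_mult_group)
qed

definition schreier :: "'a \<Rightarrow> 'a \<Rightarrow> 'a"
  where "schreier t g = t \<otimes> g \<otimes> inv (r (t \<otimes> g))"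

lemma schreier_mem: "\<lbrakk>t \<in> carrier G; g \<in> carrier G\<rbrakk> \<Longrightarrow> schreier t g \<in> N"
  unfolding schreier_def by (simp add: mult_inv_rep_mem)

lemma schreier_one: "x \<in> carrier G \<Longrightarrow> schreier (r x) \<one> = \<one>"
  unfolding schreier_def by (simp add: rep_closed rep_rep)

lemma schreier_mult:
  assumes "t \<in> carrier G" "g1 \<in> carrier G" "g2 \<in> carrier G"
  shows "schreier t (g1 \<otimes> g2) = schreier t g1 \<otimes> schreier (r (t \<otimes> g1)) g2"
proof -
  have "r (r (t \<otimes> g1) \<otimes> g2) = r (t \<otimes> (g1 \<otimes> g2))"
    using assms by (simp add: rep_mult_rep m_assoc)
  moreover have "inv (r (t \<otimes> g1)) \<otimes> (r (t \<otimes> g1) \<otimes> z) = z" if "z \<in> carrier G" for z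
    using that assms rep_closed by (simp add: m_assoc[symmetric])
  ultimately show ?thesis
    unfolding schreier_def using assms rep_closed by (simp add: m_assoc)
qed

lemma schreier_inv:
  assumes "x \<in> carrier G" "s \<in> carrier G"
  shows "schreier (r x) (inv s) = inv (schreier (r (r x \<otimes> inv s)) s)"
proof -
  let ?t = "r (r x \<otimes> inv s)"
  have "r (?t \<otimes> s) = r x"
    using assms rep_closed by (simp add: rep_mult_rep m_assoc rep_rep)
  then show ?thesis
    unfolding schreier_def using assms rep_closed by (simp add: inv_mult_group m_assoc)
qed

lemma generate_schreier:
  assumes S: "S \<subseteq> carrier G" "generate G S = carrier G"
  shows "generate G ((\<lambda>(t, s). schreier t s) ` (r ` carrier G \<times> S)) = N"
    (is "generate G ?Y = N")
proof
  have "?Y \<subseteq> N"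
    using S(1) rep_closed by (auto intro!: schreier_mem)
  then show "generate G ?Y \<subseteq> N"
    by (rule generate_subgroup_incl[OF _ subgroup_N])
  have in_Y: "schreier (r x) s \<in> ?Y" if "x \<in> carrier G" "s \<in> S" for x s
    using that by auto
  have "\<forall>x \<in> carrier G. schreier (r x) g \<in> generate G ?Y" if "g \<in> generate G S" for g
    using that
  proof (induction g)
    case one
    then show ?case by (simp add: schreier_one generate.one)
  next
    case (incl s)
    then show ?case using in_Y by (blast intro: generate.incl)
  next
    case (inv s)
    show ?case
    proof
      fix x assume x: "x \<in> carrier G"
      have "schreier (r (r x \<otimes> inv s)) s \<in> ?Y"
        using inv S(1) x rep_closed by (intro in_Y) auto
      then have "inv (schreier (r (r x \<otimes> inv s)) s) \<in> generate G ?Y"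
        by (rule generate.inv)
      then show "schreier (r x) (inv s) \<in> generate G ?Y"
        using inv S(1) x by (simp add: schreier_inv subset_iff)
    qed
  next
    case (eng g1 g2)
    show ?case
    proof
      fix x assume x: "x \<in> carrier G"
      have g: "g1 \<in> carrier G" "g2 \<in> carrier G"
        using eng.hyps generate_in_carrier[OF S(1)] by auto
      have "schreier (r x) g1 \<otimes> schreier (r (r x \<otimes> g1)) g2 \<in> generate G ?Y"
        using eng.IH x g rep_closed by (intro generate.eng) auto
      then show "schreier (r x) (g1 \<otimes> g2) \<in> generate G ?Y"
        using x g rep_closed by (simp add: schreier_mult)
    qed
  qed
  then have "schreier (r \<one>) h \<in> generate G ?Y" if "h \<in> N" for h
    using that S(2) subgroup.mem_carrier[OF subgroup_N] by blast
  moreover have "schreier (r \<one>) h = h" if "h \<in> N" for h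
    using that subgroup.mem_carrier[OF subgroup_N] by (simp add: schreier_def rep_one rep_of_mem)
  ultimately show "N \<subseteq> generate G ?Y" by auto
qed

end

lemma (in group) right_transversal_exists:
  assumes N: "subgroup N G"
  obtains r where "right_transversal G N r" "finite (rcosets N) \<Longrightarrow> finite (r ` carrier G)"
proof -
  define f where "f C = (if C = N then \<one> else (SOME y. y \<in> C))" for C
  have rep: "f (N #> x) \<in> N #> x" if "x \<in> carrier G" for x
    using rcos_self[OF that N] subgroup.one_closed[OF N] unfolding f_def by (auto intro: someI)
  have "right_transversal G N (\<lambda>x. f (N #> x))"
    by (intro right_transversal.intro right_transversal_axioms.intro is_group N)
      (use rep subgroup.subset[OF N] in \<open>simp_all add: f_def\<close>)
  moreover have "(\<lambda>x. f (N #> x)) ` carrier G = f ` (rcosets N)"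
    unfolding RCOSETS_def by auto
  ultimately show thesis using that by simp
qed

lemma (in group) fin_gen_subgroup_of_finite_index:
  assumes "fin_gen G" "subgroup N G" "finite (rcosets N)"
  shows "fin_gen (G\<lparr>carrier := N\<rparr>)"
proof -
  obtain S where S: "finite S" "S \<subseteq> carrier G" "generate G S = carrier G"
    using assms(1) unfolding fin_gen_def by auto
  obtain r where rt: "right_transversal G N r" and fin: "finite (r ` carrier G)"
    using right_transversal_exists[OF assms(2)] assms(3) by metis
  interpret right_transversal G N r by (rule rt)
  let ?Y = "(\<lambda>(t, s). schreier t s) ` (r ` carrier G \<times> S)"
  have YN: "?Y \<subseteq> N" using S(2) rep_closed by (auto intro: schreier_mem)
  have "generate (G\<lparr>carrier := N\<rparr>) ?Y = N"
    using generate_consistent[OF YN assms(2)] generate_schreier[OF S(2,3)] by simp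
  moreover have "finite ?Y" using fin S(1) by simp
  ultimately show ?thesis
    unfolding fin_gen_def using YN by (intro exI[of _ ?Y]) simp
qed

section \<open>Surjective direct systems\<close>

lemma eventually_along:
  assumes "i \<in> I" "\<And>j. j \<in> I \<Longrightarrow> i \<le> j \<Longrightarrow> P j"
  shows "eventually P (along I)"
  unfolding along_def
  by (rule eventually_INF1[OF assms(1)]) (use assms(2) in \<open>auto simp: eventually_principal\<close>)

locale surj_direct_system =
  fixes I :: "'i::linorder set" and i0 :: 'i
    and A :: "'i \<Rightarrow> ('a, 'b) monoid_scheme" and \<pi> :: "'i \<Rightarrow> 'i \<Rightarrow> 'a \<Rightarrow> 'a"
  assumes least: "i0 \<in> I" "\<And>i. i \<in> I \<Longrightarrow> i0 \<le> i"
    and groups: "\<And>i. i \<in> I \<Longrightarrow> group (A i)"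
    and hom: "\<And>i j. \<lbrakk>i \<in> I; j \<in> I; i \<le> j\<rbrakk> \<Longrightarrow> \<pi> i j \<in> hom (A i) (A j)"
    and surj: "\<And>i j. \<lbrakk>i \<in> I; j \<in> I; i \<le> j\<rbrakk> \<Longrightarrow> \<pi> i j ` carrier (A i) = carrier (A j)"
    and comp: "\<And>i j k x. \<lbrakk>i \<in> I; j \<in> I; k \<in> I; i \<le> j; j \<le> k; x \<in> carrier (A i)\<rbrakk>
                 \<Longrightarrow> \<pi> j k (\<pi> i j x) = \<pi> i k x"
begin

lemma group_hom_pi: "\<lbrakk>i \<in> I; j \<in> I; i \<le> j\<rbrakk> \<Longrightarrow> group_hom (A i) (A j) (\<pi> i j)"
  by (intro group_hom.intro group_hom_axioms.intro groups hom)

end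

locale surj_direct_limit = surj_direct_system +
  fixes B :: "('c, 'd) monoid_scheme" and \<psi> :: "'i::linorder \<Rightarrow> 'a \<Rightarrow> 'c"
  assumes limit_group: "group B" and limit: "is_direct_limit I A \<pi> B \<psi>"

context surj_direct_limit
begin

lemma psi_hom: "i \<in> I \<Longrightarrow> \<psi> i \<in> hom (A i) B"
  using limit[unfolded is_direct_limit_def, THEN conjunct1] by blast

lemma group_hom_psi: "i \<in> I \<Longrightarrow> group_hom (A i) B (\<psi> i)"
  by (intro group_hom.intro group_hom_axioms.intro groups limit_group psi_hom)

lemma psi_pi: "\<lbrakk>i \<in> I; j \<in> I; i \<le> j; x \<in> carrier (A i)\<rbrakk> \<Longrightarrow> \<psi> j (\<pi> i j x) = \<psi> i x"
  using limit[unfolded is_direct_limit_def, THEN conjunct2, THEN conjunct1] by blast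

lemma psi_eq_imp_pi_eq:
  "\<lbrakk>i \<in> I; j \<in> I; x \<in> carrier (A i); y \<in> carrier (A j); \<psi> i x = \<psi> j y\<rbrakk>
    \<Longrightarrow> \<exists>k\<in>I. i \<le> k \<and> j \<le> k \<and> \<pi> i k x = \<pi> j k y"
  using limit[unfolded is_direct_limit_def, THEN conjunct2, THEN conjunct2, THEN conjunct2] by blast

lemma psi_surj:
  assumes "j \<in> I"
  shows "\<psi> j ` carrier (A j) = carrier B"
proof -
  have eq_bottom: "\<psi> i ` carrier (A i) = \<psi> i0 ` carrier (A i0)" if "i \<in> I" for i
  proof -
    have "\<psi> i ` \<pi> i0 i ` carrier (A i0) = \<psi> i0 ` carrier (A i0)"
      unfolding image_image using psi_pi[OF least(1) that least(2)[OF that]] by simp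
    then show ?thesis using surj[OF least(1) that least(2)[OF that]] by simp
  qed
  have "carrier B = (\<Union>i\<in>I. \<psi> i ` carrier (A i))"
    using limit[unfolded is_direct_limit_def, THEN conjunct2, THEN conjunct2, THEN conjunct1] .
  also have "\<dots> = (\<Union>i\<in>I. \<psi> i0 ` carrier (A i0))"
    using eq_bottom by (rule SUP_cong[OF refl])
  also have "\<dots> = \<psi> i0 ` carrier (A i0)"
    using least(1) by auto
  finally show ?thesis using eq_bottom[OF assms] by simp
qed

lemma psi_image_preimage: "\<lbrakk>j \<in> I; N \<subseteq> carrier B\<rbrakk> \<Longrightarrow> \<psi> j ` {x \<in> carrier (A j). \<psi> j x \<in> N} = N"
  using psi_surj[of j] by auto

lemma pi_image_preimage:
  assumes "i \<in> I" "j \<in> I" "i \<le> j"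
  shows "\<pi> i j ` {x \<in> carrier (A i). \<psi> i x \<in> N} = {y \<in> carrier (A j). \<psi> j y \<in> N}"
  using surj[OF assms] psi_pi[OF assms] by force

lemma surj_direct_limit_cong:
  assumes eq: "\<And>i. i \<in> I \<Longrightarrow> A' i = A i"
  shows "surj_direct_limit I i0 A' \<pi> B \<psi>"
proof (intro surj_direct_limit.intro surj_direct_system.intro surj_direct_limit_axioms.intro)
  show "is_direct_limit I A' \<pi> B \<psi>"
    unfolding is_direct_limit_def
  proof (intro conjI ballI impI)
    show "carrier B = (\<Union>i\<in>I. \<psi> i ` carrier (A' i))"
      using psi_surj eq least(1) by auto
  qed (simp_all add: eq psi_hom psi_pi psi_eq_imp_pi_eq)
qed (simp_all add: eq least groups hom surj comp limit_group)

lemma restrict_to_preimage: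
  assumes N: "subgroup N B"
  defines "H \<equiv> {x \<in> carrier (A i0). \<psi> i0 x \<in> N}"
  shows "surj_direct_limit I i0 (\<lambda>i. (A i)\<lparr>carrier := \<pi> i0 i ` H\<rparr>) \<pi> (B\<lparr>carrier := N\<rparr>) \<psi>"
proof -
  define P where "P i = {x \<in> carrier (A i). \<psi> i x \<in> N}" for i
  have H_image: "\<pi> i0 i ` H = P i" if "i \<in> I" for i
    unfolding H_def P_def using pi_image_preimage[OF least(1) that least(2)[OF that]] .
  have P_sub: "subgroup (P i) (A i)" if "i \<in> I" for i
    unfolding P_def using group_hom.subgroup_preimage[OF group_hom_psi[OF that] N] .
  have P_carrier: "P i \<subseteq> carrier (A i)" for i
    unfolding P_def by blast
  have "surj_direct_limit I i0 (\<lambda>i. (A i)\<lparr>carrier := P i\<rparr>) \<pi> (B\<lparr>carrier := N\<rparr>) \<psi>"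
  proof (intro surj_direct_limit.intro surj_direct_system.intro surj_direct_limit_axioms.intro)
    show "i0 \<in> I" "\<And>i. i \<in> I \<Longrightarrow> i0 \<le> i" by (fact least)+
    show "group ((A i)\<lparr>carrier := P i\<rparr>)" if "i \<in> I" for i
      using group.subgroup_imp_group[OF groups[OF that] P_sub[OF that]] .
    show "group (B\<lparr>carrier := N\<rparr>)"
      using group.subgroup_imp_group[OF limit_group N] .
  next
    fix i j assume ij: "i \<in> I" "j \<in> I" "i \<le> j"
    show "\<pi> i j \<in> hom ((A i)\<lparr>carrier := P i\<rparr>) ((A j)\<lparr>carrier := P j\<rparr>)"
      using hom_restrict_carriers[OF hom[OF ij] P_carrier] pi_image_preimage[OF ij] by (simp add: P_def)
    show "\<pi> i j ` carrier ((A i)\<lparr>carrier := P i\<rparr>) = carrier ((A j)\<lparr>carrier := P j\<rparr>)"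
      using pi_image_preimage[OF ij] by (simp add: P_def)
  next
    fix i j k x
    assume "i \<in> I" "j \<in> I" "k \<in> I" "i \<le> j" "j \<le> k" "x \<in> carrier ((A i)\<lparr>carrier := P i\<rparr>)"
    then show "\<pi> j k (\<pi> i j x) = \<pi> i k x"
      using P_carrier by (simp add: comp subset_iff)
  next
    show "is_direct_limit I (\<lambda>i. (A i)\<lparr>carrier := P i\<rparr>) \<pi> (B\<lparr>carrier := N\<rparr>) \<psi>"
      unfolding is_direct_limit_def
    proof (intro conjI ballI impI)
      fix i assume i: "i \<in> I"
      show "\<psi> i \<in> hom ((A i)\<lparr>carrier := P i\<rparr>) (B\<lparr>carrier := N\<rparr>)"
        using hom_restrict_carriers[OF psi_hom[OF i] P_carrier] by (auto simp: P_def)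
    next
      fix i j x
      assume "i \<in> I" "j \<in> I" "i \<le> j" "x \<in> carrier ((A i)\<lparr>carrier := P i\<rparr>)"
      then show "\<psi> j (\<pi> i j x) = \<psi> i x"
        by (simp add: P_def psi_pi)
    next
      show "carrier (B\<lparr>carrier := N\<rparr>) = (\<Union>i\<in>I. \<psi> i ` carrier ((A i)\<lparr>carrier := P i\<rparr>))"
        using psi_image_preimage[OF _ subgroup.subset[OF N]] least(1) by (simp add: P_def) blast
    next
      fix i j x y
      assume "i \<in> I" "j \<in> I" "x \<in> carrier ((A i)\<lparr>carrier := P i\<rparr>)"
        "y \<in> carrier ((A j)\<lparr>carrier := P j\<rparr>)" "\<psi> i x = \<psi> j y"
      then show "\<exists>k\<in>I. i \<le> k \<and> j \<le> k \<and> \<pi> i k x = \<pi> j k y"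
        using psi_eq_imp_pi_eq[of i j x y] P_carrier by auto
    qed
  qed
  then show ?thesis
    by (rule surj_direct_limit.surj_direct_limit_cong) (simp add: H_image)
qed

lemma index_pi_image_preimage:
  assumes "i \<in> I" "N \<lhd> B"
  shows "card (rcosets\<^bsub>A i\<^esub> (\<pi> i0 i ` {x \<in> carrier (A i0). \<psi> i0 x \<in> N})) = card (rcosets\<^bsub>B\<^esub> N)"
  unfolding pi_image_preimage[OF least(1) assms(1) least(2)[OF assms(1)]]
  by (rule group_hom.index_preimage[OF group_hom_psi psi_surj]) (use assms in simp_all)

lemma preimage_of_psi_image:
  assumes j: "j \<in> I" and \<Phi>_sub: "\<Phi> j \<subseteq> carrier (A j)"
    and forward: "\<And>k. k \<in> I \<Longrightarrow> j \<le> k \<Longrightarrow> \<pi> j k ` \<Phi> j \<subseteq> \<Phi> k"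
    and stable: "\<And>k. k \<in> I \<Longrightarrow> j \<le> k \<Longrightarrow> {x \<in> carrier (A j). \<pi> j k x \<in> \<Phi> k} \<subseteq> \<Phi> j"
  shows "{x \<in> carrier (A j). \<psi> j x \<in> \<psi> j ` \<Phi> j} = \<Phi> j"
proof
  show "\<Phi> j \<subseteq> {x \<in> carrier (A j). \<psi> j x \<in> \<psi> j ` \<Phi> j}"
    using \<Phi>_sub by auto
  show "{x \<in> carrier (A j). \<psi> j x \<in> \<psi> j ` \<Phi> j} \<subseteq> \<Phi> j"
  proof
    fix x assume "x \<in> {x \<in> carrier (A j). \<psi> j x \<in> \<psi> j ` \<Phi> j}"
    then obtain w where x: "x \<in> carrier (A j)" and w: "w \<in> \<Phi> j" "\<psi> j x = \<psi> j w"
      by auto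
    then obtain k where k: "k \<in> I" "j \<le> k" "\<pi> j k x = \<pi> j k w"
      using psi_eq_imp_pi_eq[OF j j x] \<Phi>_sub by blast
    then have "\<pi> j k x \<in> \<Phi> k"
      using forward[OF k(1,2)] w(1) by auto
    then show "x \<in> \<Phi> j"
      using stable[OF k(1,2)] x by blast
  qed
qed

lemma compatible_subgroups_eventually_saturated:
  assumes sg: "\<And>i. i \<in> I \<Longrightarrow> subgroup (\<Phi> i) (A i)"
    and image: "\<And>i j. \<lbrakk>i \<in> I; j \<in> I; i \<le> j\<rbrakk> \<Longrightarrow> \<pi> i j ` \<Phi> i = \<Phi> j"
    and fin: "finite (rcosets\<^bsub>A i0\<^esub> (\<Phi> i0))"
  obtains i1 where "i1 \<in> I"
    "\<And>j. \<lbrakk>j \<in> I; i1 \<le> j\<rbrakk> \<Longrightarrow> {x \<in> carrier (A j). \<psi> j x \<in> \<psi> j ` \<Phi> j} = \<Phi> j"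
proof -
  define M where "M k = {x \<in> carrier (A i0). \<pi> i0 k x \<in> \<Phi> k}" for k
  interpret A0: group "A i0" by (rule groups[OF least(1)])
  have M_subgroup: "subgroup (M k) (A i0)" if "k \<in> I" for k
    unfolding M_def using group_hom.subgroup_preimage[OF group_hom_pi[OF least(1) that least(2)[OF that]] sg[OF that]] .
  have M_finite: "finite (rcosets\<^bsub>A i0\<^esub> (M k))" if "k \<in> I" for k
  proof (rule A0.index_supergroup_le(1)[OF sg[OF least(1)] M_subgroup[OF that] _ fin])
    show "\<Phi> i0 \<subseteq> M k"
      using image[OF least(1) that least(2)[OF that]] subgroup.subset[OF sg[OF least(1)]]
      unfolding M_def by blast
  qed
  have M_mono: "M k \<subseteq> M l" if "k \<in> I" "l \<in> I" "k \<le> l" for k l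
  proof
    fix x assume "x \<in> M k"
    then have x: "x \<in> carrier (A i0)" "\<pi> i0 k x \<in> \<Phi> k" unfolding M_def by auto
    have "\<pi> i0 l x = \<pi> k l (\<pi> i0 k x)"
      using comp[OF least(1) that(1,2) least(2)[OF that(1)] that(3) x(1)] by simp
    then show "x \<in> M l" using image[OF that] x unfolding M_def by auto
  qed
  obtain i1 where i1: "i1 \<in> I" and M_stable: "\<And>k. k \<in> I \<Longrightarrow> i1 \<le> k \<Longrightarrow> M k = M i1"
    using A0.mono_subgroups_stabilise[where M = M, OF least(1) M_subgroup M_finite M_mono] by blast
  have "{x \<in> carrier (A j). \<psi> j x \<in> \<psi> j ` \<Phi> j} = \<Phi> j" if j: "j \<in> I" "i1 \<le> j" for j
  proof (rule preimage_of_psi_image[where \<Phi> = \<Phi>, OF j(1) subgroup.subset[OF sg[OF j(1)]]])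
    show "\<pi> j k ` \<Phi> j \<subseteq> \<Phi> k" if "k \<in> I" "j \<le> k" for k
      using image[OF j(1) that] by simp
    show "{x \<in> carrier (A j). \<pi> j k x \<in> \<Phi> k} \<subseteq> \<Phi> j" if k: "k \<in> I" "j \<le> k" for k
    proof
      fix x assume x: "x \<in> {x \<in> carrier (A j). \<pi> j k x \<in> \<Phi> k}"
      then obtain y where y: "y \<in> carrier (A i0)" "x = \<pi> i0 j y"
        using surj[OF least(1) j(1) least(2)[OF j(1)]] by auto
      then have "y \<in> M k"
        using x comp[OF least(1) j(1) k(1) least(2)[OF j(1)] k(2) y(1)] unfolding M_def by simp
      then have "y \<in> M j"
        using M_stable[OF k(1)] M_stable[OF j] j(2) k(2) by simp
      then show "x \<in> \<Phi> j" unfolding M_def using y by simp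
    qed
  qed
  then show thesis using that i1 by blast
qed

lemma eventually_d_p_eq:
  assumes fg: "fin_gen (A i0)" and p: "p \<noteq> 0"
  shows "eventually (\<lambda>j. d_p (A j) p = d_p B p) (along I)"
proof -
  have normal: "comm_ppow (A i) p \<lhd> A i" if "i \<in> I" for i
    using group.comm_ppow_normal[OF groups[OF that]] .
  have image: "\<pi> i j ` comm_ppow (A i) p = comm_ppow (A j) p" if "i \<in> I" "j \<in> I" "i \<le> j" for i j
    using group_hom.comm_ppow_image[OF group_hom_pi[OF that] surj[OF that]] .
  have fin: "finite (rcosets\<^bsub>A i0\<^esub> (comm_ppow (A i0) p))"
    using group.finite_index_comm_ppow[OF groups[OF least(1)] fg p] .
  obtain i1 where i1: "i1 \<in> I" and kernel:
    "\<And>j. \<lbrakk>j \<in> I; i1 \<le> j\<rbrakk> \<Longrightarrow>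
      {x \<in> carrier (A j). \<psi> j x \<in> \<psi> j ` comm_ppow (A j) p} = comm_ppow (A j) p"
    using compatible_subgroups_eventually_saturated[where \<Phi> = "\<lambda>i. comm_ppow (A i) p",
        OF normal_imp_subgroup[OF normal] image fin] by blast
  have "d_p (A j) p = d_p B p" if j: "j \<in> I" "i1 \<le> j" for j
  proof -
    have "A j Mod comm_ppow (A j) p \<cong> B Mod comm_ppow B p"
      using group_hom.preimage_normal(2)[OF group_hom_psi[OF j(1)] psi_surj[OF j(1)]
          group.comm_ppow_normal[OF limit_group, of p]] kernel[OF j]
        group_hom.comm_ppow_image[OF group_hom_psi[OF j(1)] psi_surj[OF j(1)]]
      by simp
    then show ?thesis
      unfolding d_p_def
      using gen_rank_iso normal.factorgroup_is_group normal[OF j(1)]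
        group.comm_ppow_normal[OF limit_group] by metis
  qed
  then show ?thesis
    using i1 by (intro eventually_along) auto
qed

end

theorem lemma3p4:
  fixes I :: "'i::linorder set" and i0 :: 'i
    and G :: "'i \<Rightarrow> 'a monoid" and \<pi> :: "'i \<Rightarrow> 'i \<Rightarrow> 'a \<Rightarrow> 'a"
    and Ginf :: "'c monoid" and \<psi> :: "'i \<Rightarrow> 'a \<Rightarrow> 'c"
    and p :: nat and K :: "'c set"
  assumes i0: "i0 \<in> I" "\<forall>i\<in>I. i0 \<le> i"
    and grp: "\<forall>i\<in>I. group (G i) \<and> fin_gen (G i)"
    and hom: "\<forall>i\<in>I. \<forall>j\<in>I. i \<le> j \<longrightarrow> \<pi> i j \<in> hom (G i) (G j)"
    and surj: "\<forall>i\<in>I. \<forall>j\<in>I. i \<le> j \<longrightarrow> \<pi> i j ` carrier (G i) = carrier (G j)"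
    and id: "\<forall>i\<in>I. \<forall>x\<in>carrier (G i). \<pi> i i x = x"
    and comp: "\<forall>i\<in>I. \<forall>j\<in>I. \<forall>k\<in>I. i \<le> j \<longrightarrow> j \<le> k \<longrightarrow>
                 (\<forall>x\<in>carrier (G i). \<pi> j k (\<pi> i j x) = \<pi> i k x)"
    and ginf: "group Ginf" "is_direct_limit I G \<pi> Ginf \<psi>"
    and p: "Factorial_Ring.prime p"
    and K: "K \<lhd> Ginf" "p_power_index Ginf K p"
  shows "\<exists>H'. H' \<lhd> G i0 \<and> p_power_index (G i0) H' p \<and>
           K = \<psi> i0 ` H' \<and>
           is_direct_limit I (\<lambda>i. (G i)\<lparr>carrier := \<pi> i0 i ` H'\<rparr>) \<pi> (Ginf\<lparr>carrier := K\<rparr>) \<psi> \<and>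
           ((\<lambda>i. card (rcosets\<^bsub>G i\<^esub> (\<pi> i0 i ` H'))) \<longlongrightarrow> card (rcosets\<^bsub>Ginf\<^esub> K)) (along I) \<and>
           ((\<lambda>i. d_p ((G i)\<lparr>carrier := \<pi> i0 i ` H'\<rparr>) p) \<longlongrightarrow> d_p (Ginf\<lparr>carrier := K\<rparr>) p) (along I)"
proof -
  interpret surj_direct_limit I i0 G \<pi> Ginf \<psi>
    by (intro surj_direct_limit.intro surj_direct_system.intro surj_direct_limit_axioms.intro)
      (use i0 grp hom surj comp ginf in auto)
  define H where "H = {x \<in> carrier (G i0). \<psi> i0 x \<in> K}"
  interpret R: surj_direct_limit I i0 "\<lambda>i. (G i)\<lparr>carrier := \<pi> i0 i ` H\<rparr>" \<pi> "Ginf\<lparr>carrier := K\<rparr>" \<psi>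
    unfolding H_def by (rule restrict_to_preimage[OF normal_imp_subgroup[OF K(1)]])
  have H_normal: "H \<lhd> G i0"
    unfolding H_def by (rule group_hom.preimage_normal(1)[OF group_hom_psi[OF i0(1)] psi_surj[OF i0(1)] K(1)])
  have index: "card (rcosets\<^bsub>G i\<^esub> (\<pi> i0 i ` H)) = card (rcosets\<^bsub>Ginf\<^esub> K)" if "i \<in> I" for i
    unfolding H_def using index_pi_image_preimage[OF that K(1)] .
  have H_bottom: "\<pi> i0 i0 ` H = H"
    using id i0(1) unfolding H_def by force
  have H_index: "p_power_index (G i0) H p"
    using K(2) index[OF i0(1)] unfolding H_bottom p_power_index_def by simp
  \<comment> \<open>\<open>card\<close> of an infinite set is 0, so a \<open>p\<close>-power index is a finite index\<close>
  then have "finite (rcosets\<^bsub>G i0\<^esub> H)"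
    using prime_gt_0_nat[OF p] unfolding p_power_index_def by (metis card.infinite power_not_zero not_gr0)
  then have "fin_gen ((G i0)\<lparr>carrier := \<pi> i0 i0 ` H\<rparr>)"
    unfolding H_bottom using grp i0(1) normal_imp_subgroup[OF H_normal]
    by (auto intro: group.fin_gen_subgroup_of_finite_index)
  then have d_p_limit: "((\<lambda>i. d_p ((G i)\<lparr>carrier := \<pi> i0 i ` H\<rparr>) p) \<longlongrightarrow> d_p (Ginf\<lparr>carrier := K\<rparr>) p) (along I)"
    by (intro tendsto_eventually R.eventually_d_p_eq) (use p in auto)
  have index_limit: "((\<lambda>i. card (rcosets\<^bsub>G i\<^esub> (\<pi> i0 i ` H))) \<longlongrightarrow> card (rcosets\<^bsub>Ginf\<^esub> K)) (along I)"
    by (rule tendsto_eventually, rule eventually_along[OF i0(1)]) (rule index)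
  have K_image: "K = \<psi> i0 ` H"
    unfolding H_def using psi_image_preimage[OF i0(1) normal_imp_subgroup[OF K(1), THEN subgroup.subset]] ..
  show ?thesis
    using H_normal H_index K_image R.limit index_limit d_p_limit
    by (intro exI[of _ H] conjI) assumption+
qed

end
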